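(* Let $n\ge 1$ and let $m\in\{3,5,6\}$ or $m=2^k$ for some integer $k\ge 2$. Then the grid graph $P_m\times P_n$ is odd prime.
   Context: All graphs are finite and simple. A graph $G$ of order $N$ is odd prime if there is a bijection $\ell:V(G)\to\{1,3,\ldots,2N-1\}$ with $\gcd(\ell(u),\ell(v))=1$ for every edge $uv$. $P_r$ denotes the path on $r$ vertices, and the grid graph $P_m\times P_n$ is the Cartesian product of $P_m$ and $P_n$: vertices $(a,b)$ with $1\le a\le m$, $1\le b\le n$, two vertices adjacent when they agree in one coordinate and differ by $1$ in the other. *)

theory Defs
  imports Main
begin

definition odd_prime_graph :: "'a set \<Rightarrow> ('a \<Rightarrow> 'a \<Rightarrow> bool) \<Rightarrow> bool" where
  "odd_prime_graph V E \<longleftrightarrow>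
     (\<exists>l. bij_betw l V {k. \<exists>i<card V. k = 2 * i + 1} \<and>
          (\<forall>u\<in>V. \<forall>v\<in>V. E u v \<longrightarrow> coprime (l u) (l v :: nat)))"

definition grid_vertices :: "nat \<Rightarrow> nat \<Rightarrow> (nat \<times> nat) set" where
  "grid_vertices m n = {1..m} \<times> {1..n}"

definition grid_adj :: "nat \<times> nat \<Rightarrow> nat \<times> nat \<Rightarrow> bool" where
  "grid_adj p q \<longleftrightarrow>
     (fst p = fst q \<and> (snd p = snd q + 1 \<or> snd q = snd p + 1)) \<or>
     (snd p = snd q \<and> (fst p = fst q + 1 \<or> fst q = fst p + 1))"

end

theory Submission
  imports Defs
begin

(* Number the mn vertices 0, ..., mn - 1 and label the vertex numbered k by 2k + 1; these labels
   are exactly the first mn odd numbers. Two odd numbers differing by a power of two are coprime,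
   as a common divisor is odd and divides that power. So it suffices to number the grid so that
   adjacent vertices get numbers differing by a power of two. The b-th copy of P_m receives the
   block of numbers m(b - 1), ..., m(b - 1) + m - 1, arranged by a permutation depending only on
   b mod p, and the requirements on these p permutations are finite checks. For m = 2^k the
   identity works: neighbours within a copy differ by 1, neighbours in consecutive copies by m.
   For m = 3, 5, 6 a small cyclic table does. *)

definition power_of_two_step :: "nat \<Rightarrow> nat \<Rightarrow> bool" where
  "power_of_two_step x y \<longleftrightarrow> (\<exists>e. y = x + 2 ^ e)"

lemma coprime_odd_add_power_of_two: "odd (x :: nat) \<Longrightarrow> coprime x (x + 2 ^ e)"
  by (metis coprimeI coprime_power_right_iff coprime_right_2_iff_odd
      dvd_add_right_iff not_coprimeI)

lemma coprime_if_power_of_two_step: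
  assumes "odd x" "power_of_two_step x y"
  shows "coprime x y"
  using assms coprime_odd_add_power_of_two unfolding power_of_two_step_def by blast

lemma power_of_two_step_add_left:
  "power_of_two_step x y \<Longrightarrow> power_of_two_step (c + x) (c + y)"
  unfolding power_of_two_step_def by auto

lemma power_of_two_step_odd:
  assumes "power_of_two_step x y"
  shows "power_of_two_step (2 * x + 1) (2 * y + 1)"
proof -
  obtain e where "y = x + 2 ^ e"
    using assms unfolding power_of_two_step_def by blast
  then have "2 * y + 1 = (2 * x + 1) + 2 ^ Suc e"
    by simp
  then show ?thesis
    unfolding power_of_two_step_def by blast
qed

lemma odd_prime_graph_if_power_of_two_numbering:
  fixes f :: "'a \<Rightarrow> nat"
  assumes bij: "bij_betw f V {..<card V}"
    and adj: "\<And>u v. u \<in> V \<Longrightarrow> v \<in> V \<Longrightarrow> E u v \<Longrightarrow>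
      power_of_two_step (f u) (f v) \<or> power_of_two_step (f v) (f u)"
  shows "odd_prime_graph V E"
  unfolding odd_prime_graph_def
proof (intro exI conjI ballI impI)
  have "bij_betw (\<lambda>i. 2 * i + 1) {..<card V} {k. \<exists>i<card V. k = 2 * i + 1}"
    by (auto simp: bij_betw_def inj_on_def)
  then show "bij_betw (\<lambda>v. 2 * f v + 1) V {k. \<exists>i<card V. k = 2 * i + 1}"
    using bij_betw_trans[OF bij] by (simp add: comp_def)
  fix u v assume "u \<in> V" "v \<in> V" "E u v"
  then consider "power_of_two_step (f u) (f v)" | "power_of_two_step (f v) (f u)"
    using adj by blast
  then show "coprime (2 * f u + 1) (2 * f v + 1)"
  proof cases
    case 1
    then show ?thesis
      by (intro coprime_if_power_of_two_step power_of_two_step_odd) simp_all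
  next
    case 2
    then have "coprime (2 * f v + 1) (2 * f u + 1)"
      by (intro coprime_if_power_of_two_step power_of_two_step_odd) simp_all
    then show ?thesis
      by (metis coprime_commute)
  qed
qed

(* g i t is the position of vertex i of copy t within its block; the last condition makes the
   numbers m b + g i t and m (b + 1) + g i (t + 1) of a vertex and its neighbour in the next copy
   differ by a power of two. *)
definition grid_pattern :: "nat \<Rightarrow> nat \<Rightarrow> (nat \<Rightarrow> nat \<Rightarrow> nat) \<Rightarrow> bool" where
  "grid_pattern m p g \<longleftrightarrow> 0 < p \<and> (\<forall>t\<in>{..<p}.
     inj_on (\<lambda>i. g i t) {..<m} \<and> (\<forall>i\<in>{..<m}. g i t < m) \<and>
     (\<forall>i\<in>{..<m - 1}.
        power_of_two_step (g i t) (g (i + 1) t) \<or> power_of_two_step (g (i + 1) t) (g i t)) \<and>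
     (\<forall>i\<in>{..<m}. power_of_two_step (g i t) (m + g i ((t + 1) mod p))))"

definition grid_index :: "nat \<Rightarrow> nat \<Rightarrow> (nat \<Rightarrow> nat \<Rightarrow> nat) \<Rightarrow> nat \<times> nat \<Rightarrow> nat" where
  "grid_index m p g = (\<lambda>(a, b). m * (b - 1) + g (a - 1) ((b - 1) mod p))"

lemma
  assumes "grid_pattern m p g" "1 \<le> a" "a \<le> m"
  shows grid_index_div: "grid_index m p g (a, b) div m = b - 1"
    and grid_index_mod: "grid_index m p g (a, b) mod m = g (a - 1) ((b - 1) mod p)"
proof -
  have "g (a - 1) ((b - 1) mod p) < m"
    using assms unfolding grid_pattern_def by auto
  then show "grid_index m p g (a, b) div m = b - 1"
    and "grid_index m p g (a, b) mod m = g (a - 1) ((b - 1) mod p)"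
    unfolding grid_index_def by simp_all
qed

lemma bij_betw_grid_index:
  assumes pat: "grid_pattern m p g"
  shows "bij_betw (grid_index m p g) (grid_vertices m n) {..<m * n}"
proof (rule bij_betw_imageI)
  show "inj_on (grid_index m p g) (grid_vertices m n)"
  proof (rule inj_onI, clarify)
    fix a b a' b'
    assume vs: "(a, b) \<in> grid_vertices m n" "(a', b') \<in> grid_vertices m n"
      and eq: "grid_index m p g (a, b) = grid_index m p g (a', b')"
    have "b - 1 = b' - 1"
      using eq vs grid_index_div[OF pat] unfolding grid_vertices_def
      by (metis mem_Sigma_iff atLeastAtMost_iff)
    moreover have "g (a - 1) ((b - 1) mod p) = g (a' - 1) ((b - 1) mod p)"
      using eq vs grid_index_mod[OF pat] calculation unfolding grid_vertices_def
      by (metis mem_Sigma_iff atLeastAtMost_iff)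
    moreover have "inj_on (\<lambda>i. g i ((b - 1) mod p)) {..<m}"
      using pat unfolding grid_pattern_def by simp
    ultimately show "a = a' \<and> b = b'"
      using vs unfolding grid_vertices_def inj_on_def by fastforce
  qed
  then have "card (grid_index m p g ` grid_vertices m n) = m * n"
    by (simp add: card_image grid_vertices_def card_cartesian_product)
  moreover have "grid_index m p g ` grid_vertices m n \<subseteq> {..<m * n}"
  proof clarify
    fix a b assume "(a, b) \<in> grid_vertices m n"
    then have "grid_index m p g (a, b) div m < n" "0 < m"
      using grid_index_div[OF pat] unfolding grid_vertices_def by auto
    then show "grid_index m p g (a, b) < m * n"
      by (simp add: div_less_iff_less_mult mult.commute)
  qed
  ultimately show "grid_index m p g ` grid_vertices m n = {..<m * n}"
    using card_subset_eq by (metis card_lessThan finite_lessThan)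
qed

lemma grid_index_adj:
  assumes pat: "grid_pattern m p g"
    and "u \<in> grid_vertices m n" "v \<in> grid_vertices m n" "grid_adj u v"
  shows "power_of_two_step (grid_index m p g u) (grid_index m p g v) \<or>
    power_of_two_step (grid_index m p g v) (grid_index m p g u)"
proof -
  let ?idx = "grid_index m p g"
  have along_copy: "power_of_two_step (?idx (a, b)) (?idx (a, b + 1))"
    if "1 \<le> a" "a \<le> m" "1 \<le> b" for a b
  proof -
    define t where "t = (b - 1) mod p"
    have "power_of_two_step (g (a - 1) t) (m + g (a - 1) ((t + 1) mod p))"
      using pat that unfolding grid_pattern_def t_def by simp
    moreover have "?idx (a, b + 1) = m * (b - 1) + (m + g (a - 1) ((t + 1) mod p))"
      using that unfolding grid_index_def t_def by (cases b) (simp_all add: mod_Suc_eq)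
    ultimately show ?thesis
      using power_of_two_step_add_left unfolding grid_index_def t_def by simp
  qed
  have across_copy: "power_of_two_step (?idx (a, b)) (?idx (a + 1, b)) \<or>
      power_of_two_step (?idx (a + 1, b)) (?idx (a, b))"
    if "1 \<le> a" "a + 1 \<le> m" for a b
  proof -
    define t where "t = (b - 1) mod p"
    have "t < p"
      using pat unfolding grid_pattern_def t_def by simp
    then have "\<forall>i\<in>{..<m - 1}.
        power_of_two_step (g i t) (g (i + 1) t) \<or> power_of_two_step (g (i + 1) t) (g i t)"
      using pat unfolding grid_pattern_def by blast
    from bspec[OF this, of "a - 1"]
    have "power_of_two_step (g (a - 1) t) (g a t) \<or> power_of_two_step (g a t) (g (a - 1) t)"
      using that by simp
    then show ?thesis
      using power_of_two_step_add_left unfolding grid_index_def t_def by auto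
  qed
  from assms(2-4) show ?thesis
    unfolding grid_adj_def grid_vertices_def
    using along_copy across_copy by (cases u, cases v) auto
qed

lemma odd_prime_grid_if_grid_pattern:
  assumes "grid_pattern m p g"
  shows "odd_prime_graph (grid_vertices m n) grid_adj"
proof (rule odd_prime_graph_if_power_of_two_numbering)
  have "card (grid_vertices m n) = m * n"
    by (simp add: grid_vertices_def card_cartesian_product)
  then show "bij_betw (grid_index m p g) (grid_vertices m n) {..<card (grid_vertices m n)}"
    using bij_betw_grid_index[OF assms] by simp
qed (use grid_index_adj[OF assms] in blast)

lemma power_of_two_step_small:
  "x < y \<Longrightarrow> y - x \<in> {1, 2, 4, 8} \<Longrightarrow> power_of_two_step x y"
  unfolding power_of_two_step_def
  by (auto intro: exI[of _ 0] exI[of _ 1] exI[of _ 2] exI[of _ 3])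

lemma grid_pattern_power_of_two: "grid_pattern (2 ^ k) 1 (\<lambda>i t. i)"
  unfolding grid_pattern_def power_of_two_step_def
  by (auto intro: exI[of _ 0] exI[of _ k])

lemma grid_pattern_3: "grid_pattern 3 3 (\<lambda>i t. (i + t) mod 3)"
  unfolding grid_pattern_def
  by (simp add: lessThan_nat_numeral lessThan_Suc power_of_two_step_small)

lemma grid_pattern_5:
  "grid_pattern 5 5 (\<lambda>i t. [0, 3, 2, 1, 4] ! (([0, 2, 4, 1, 3] ! i + t) mod 5))"
  unfolding grid_pattern_def
  by (simp add: lessThan_nat_numeral lessThan_Suc power_of_two_step_small)

lemma grid_pattern_6: "grid_pattern 6 3 (\<lambda>i t. ([0, 2, 4, 5, 1, 3] ! i + 2 * t) mod 6)"
  unfolding grid_pattern_def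
  by (simp add: lessThan_nat_numeral lessThan_Suc power_of_two_step_small)

theorem corollary3p11:
  fixes m n :: nat
  assumes "n \<ge> 1"
    and "m \<in> {3, 5, 6} \<or> (\<exists>k::nat. k \<ge> 2 \<and> m = 2 ^ k)"
  shows "odd_prime_graph (grid_vertices m n) grid_adj"
  using assms(2)
    odd_prime_grid_if_grid_pattern[OF grid_pattern_3]
    odd_prime_grid_if_grid_pattern[OF grid_pattern_5]
    odd_prime_grid_if_grid_pattern[OF grid_pattern_6]
    odd_prime_grid_if_grid_pattern[OF grid_pattern_power_of_two]
  by auto

end
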